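(* Let $(\mathfrak{Q},\&,e)$ be a unital quantale and $p,q\in\mathfrak{Q}$. Then: (1) $\mathcal{D}\mathfrak{Q}(\bot,q)=\mathcal{D}\mathfrak{Q}(q,\bot)=\{\bot\}$; (2) $\mathcal{D}\mathfrak{Q}(e,e)=\mathfrak{Q}$; (3) $q\in\mathcal{D}\mathfrak{Q}(q,q)$; (4) $\bot\in\mathcal{D}\mathfrak{Q}(p,q)$; (5) $e\in\mathcal{D}\mathfrak{Q}(\top,\top)$ if and only if $\mathfrak{Q}$ is integral. Moreover, (6) $\mathfrak{Q}$ is integral if and only if $\mathcal{D}\mathfrak{Q}(p,q)\subseteq\{u\in\mathfrak{Q}\mid u\le p\wedge q\}$ for all $p,q\in\mathfrak{Q}$; (7) $\mathfrak{Q}$ is divisible if and only if $\mathcal{D}\mathfrak{Q}(p,q)=\{u\in\mathfrak{Q}\mid u\le p\wedge q\}$ for all $p,q\in\mathfrak{Q}$.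
   Context: A unital quantale $(\mathfrak{Q},\&,e)$ is a complete lattice $\mathfrak{Q}$ with an associative binary operation $\&$ having unit $e$ and preserving arbitrary joins in each variable separately; throughout it is assumed non-trivial, i.e. $\bot<e$. The left and right implications $/$ and $\backslash$ are defined by $p\& q\le r\iff p\le r/ q\iff q\le p\backslash r$. $\mathfrak{Q}$ is integral if $e=\top$. $\mathfrak{Q}$ is divisible if whenever $u\le q$ one has $q\&(q\backslash u)=u=(u/ q)\& q$. For $p,q\in\mathfrak{Q}$, $\mathcal{D}\mathfrak{Q}(p,q)=\{u\in\mathfrak{Q}\mid (u/ p)\& p=u=q\&(q\backslash u)\}$ (the elements right-divisible by $p$ and left-divisible by $q$). *)

theory Defs
  imports Main
begin

definition unital_quantale :: "('a::complete_lattice \<Rightarrow> 'a \<Rightarrow> 'a) \<Rightarrow> 'a \<Rightarrow> bool" where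
  "unital_quantale mult e \<longleftrightarrow>
     (\<forall>a b c. mult (mult a b) c = mult a (mult b c)) \<and>
     (\<forall>a. mult e a = a \<and> mult a e = a) \<and>
     (\<forall>A b. mult (Sup A) b = (SUP a\<in>A. mult a b)) \<and>
     (\<forall>a B. mult a (Sup B) = (SUP b\<in>B. mult a b)) \<and>
     bot < e"

text \<open>Left implication r / q: p \<le> r / q iff mult p q \<le> r.\<close>
definition lres :: "('a::complete_lattice \<Rightarrow> 'a \<Rightarrow> 'a) \<Rightarrow> 'a \<Rightarrow> 'a \<Rightarrow> 'a" where
  "lres mult r q = Sup {p. mult p q \<le> r}"

text \<open>Right implication p \ r: q \<le> p \ r iff mult p q \<le> r.\<close>
definition rres :: "('a::complete_lattice \<Rightarrow> 'a \<Rightarrow> 'a) \<Rightarrow> 'a \<Rightarrow> 'a \<Rightarrow> 'a" where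
  "rres mult p r = Sup {q. mult p q \<le> r}"

definition integral :: "('a::complete_lattice \<Rightarrow> 'a \<Rightarrow> 'a) \<Rightarrow> 'a \<Rightarrow> bool" where
  "integral mult e \<longleftrightarrow> e = top"

definition divisible :: "('a::complete_lattice \<Rightarrow> 'a \<Rightarrow> 'a) \<Rightarrow> bool" where
  "divisible mult \<longleftrightarrow> (\<forall>u q. u \<le> q \<longrightarrow>
      mult q (rres mult q u) = u \<and> mult (lres mult u q) q = u)"

definition DQ :: "('a::complete_lattice \<Rightarrow> 'a \<Rightarrow> 'a) \<Rightarrow> 'a \<Rightarrow> 'a \<Rightarrow> 'a set" where
  "DQ mult p q = {u. mult (lres mult u p) p = u \<and> mult q (rres mult q u) = u}"

end

theory Submission
  imports Defs
begin

text \<open>The only non-routine point is divisibility: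
  it places e in DQ(top, top), and since top & top = top this forces e = top; integrality in turn
  bounds DQ(p, q) by p \<sqinter> q, while divisibility supplies the reverse inclusion.\<close>

locale quantale =
  fixes mult :: "'a::complete_lattice \<Rightarrow> 'a \<Rightarrow> 'a"
  assumes mult_assoc: "mult (mult a b) c = mult a (mult b c)"
    and mult_Sup_left: "mult (Sup A) b = (SUP a\<in>A. mult a b)"
    and mult_Sup_right: "mult a (Sup B) = (SUP b\<in>B. mult a b)"
begin

lemma mult_bot_left [simp]: "mult bot b = bot"
  using mult_Sup_left[of "{}" b] by simp

lemma mult_bot_right [simp]: "mult b bot = bot"
  using mult_Sup_right[of b "{}"] by simp

lemma mult_mono_left: "a \<le> a' \<Longrightarrow> mult a b \<le> mult a' b"
  using mult_Sup_left[of "{a, a'}" b] by (simp add: sup_absorb2 le_iff_sup)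

lemma mult_mono_right: "b \<le> b' \<Longrightarrow> mult a b \<le> mult a b'"
  using mult_Sup_right[of a "{b, b'}"] by (simp add: sup_absorb2 le_iff_sup)

lemma le_lres_iff: "p \<le> lres mult r q \<longleftrightarrow> mult p q \<le> r"
proof
  assume "p \<le> lres mult r q"
  then have "mult p q \<le> mult (lres mult r q) q" by (rule mult_mono_left)
  also have "\<dots> \<le> r" unfolding lres_def mult_Sup_left by (auto intro: SUP_least)
  finally show "mult p q \<le> r" .
qed (auto simp: lres_def intro: Sup_upper)

lemma le_rres_iff: "q \<le> rres mult p r \<longleftrightarrow> mult p q \<le> r"
proof
  assume "q \<le> rres mult p r"
  then have "mult p q \<le> mult p (rres mult p r)" by (rule mult_mono_right)
  also have "\<dots> \<le> r" unfolding rres_def mult_Sup_right by (auto intro: SUP_least)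
  finally show "mult p q \<le> r" .
qed (auto simp: rres_def intro: Sup_upper)

lemma mult_lres_le: "mult (lres mult r q) q \<le> r"
  using le_lres_iff by blast

lemma mult_rres_le: "mult p (rres mult p r) \<le> r"
  using le_rres_iff by blast

lemma bot_in_DQ: "bot \<in> DQ mult p q"
  using mult_lres_le[of bot p] mult_rres_le[of q bot] by (simp add: DQ_def bot_unique)

lemma DQ_bot_left: "DQ mult bot q = {bot}"
  using bot_in_DQ by (auto simp: DQ_def)

lemma DQ_bot_right: "DQ mult q bot = {bot}"
  using bot_in_DQ by (auto simp: DQ_def)

lemma DQ_diag_iff: "u \<in> DQ mult q q \<longleftrightarrow> mult q (rres mult q u) = u \<and> mult (lres mult u q) q = u"
  by (auto simp: DQ_def)

lemma divisible_iff_DQ_diag: "divisible mult \<longleftrightarrow> (\<forall>u q. u \<le> q \<longrightarrow> u \<in> DQ mult q q)"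
  by (simp add: divisible_def DQ_diag_iff)

end

locale quantale_with_unit = quantale +
  fixes e :: "'a::complete_lattice"
  assumes mult_unit_left [simp]: "mult e a = a"
    and mult_unit_right [simp]: "mult a e = a"
begin

lemma mult_top_top [simp]: "mult top top = top"
  using mult_mono_left[of e top top] by (simp add: top_unique)

lemma lres_unit [simp]: "lres mult u e = u"
  by (rule antisym) (use mult_lres_le[of u e] le_lres_iff[of u u e] in simp_all)

lemma rres_unit [simp]: "rres mult e u = u"
  by (rule antisym) (use mult_rres_le[of e u] le_rres_iff[of u e u] in simp_all)

lemma DQ_unit_unit: "DQ mult e e = UNIV"
  by (simp add: DQ_def)

lemma self_in_DQ: "q \<in> DQ mult q q"
proof -
  have "mult e q \<le> mult (lres mult q q) q"
    by (rule mult_mono_left) (simp add: le_lres_iff)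
  then have "mult (lres mult q q) q = q"
    using mult_lres_le[of q q] by simp
  moreover have "mult q e \<le> mult q (rres mult q q)"
    by (rule mult_mono_right) (simp add: le_rres_iff)
  then have "mult q (rres mult q q) = q"
    using mult_rres_le[of q q] by simp
  ultimately show ?thesis by (simp add: DQ_def)
qed

lemma unit_in_DQ_top_iff: "e \<in> DQ mult top top \<longleftrightarrow> e = top"
proof
  assume "e \<in> DQ mult top top"
  then have div: "mult (lres mult e top) top = e" by (simp add: DQ_def)
  have "e = mult (lres mult e top) (mult top top)" using div by simp
  also have "\<dots> = mult e top" by (simp only: mult_assoc[symmetric] div)
  finally show "e = top" by simp
next
  assume "e = top"
  moreover have "lres mult top top = top" "rres mult top top = top"
    by (simp_all add: lres_def rres_def)
  ultimately show "e \<in> DQ mult top top" by (simp add: DQ_def)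
qed

lemma integral_iff_DQ_le_inf: "e = top \<longleftrightarrow> (\<forall>p q. DQ mult p q \<subseteq> {u. u \<le> inf p q})"
proof
  assume "e = top"
  show "\<forall>p q. DQ mult p q \<subseteq> {u. u \<le> inf p q}"
  proof (intro allI subsetI)
    fix p q u assume "u \<in> DQ mult p q"
    then have "mult (lres mult u p) p = u" and "mult q (rres mult q u) = u"
      by (auto simp: DQ_def)
    moreover have "mult (lres mult u p) p \<le> mult e p" and "mult q (rres mult q u) \<le> mult q e"
      using \<open>e = top\<close> by (simp_all add: mult_mono_left mult_mono_right)
    ultimately show "u \<in> {u. u \<le> inf p q}" by simp
  qed
next
  assume "\<forall>p q. DQ mult p q \<subseteq> {u. u \<le> inf p q}"
  then have "top \<le> inf e e" using DQ_unit_unit by blast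
  then show "e = top" by (simp add: top_unique)
qed

lemma divisible_iff_DQ_eq_inf: "divisible mult \<longleftrightarrow> (\<forall>p q. DQ mult p q = {u. u \<le> inf p q})"
proof
  assume div: "divisible mult"
  then have "e \<in> DQ mult top top" by (simp add: divisible_iff_DQ_diag)
  then have "\<forall>p q. DQ mult p q \<subseteq> {u. u \<le> inf p q}"
    by (simp add: unit_in_DQ_top_iff integral_iff_DQ_le_inf)
  moreover have "{u. u \<le> inf p q} \<subseteq> DQ mult p q" for p q
    using div by (auto simp: divisible_def DQ_def)
  ultimately show "\<forall>p q. DQ mult p q = {u. u \<le> inf p q}" by blast
next
  assume "\<forall>p q. DQ mult p q = {u. u \<le> inf p q}"
  then show "divisible mult" by (simp add: divisible_iff_DQ_diag)
qed

end

lemma unital_quantale_imp_quantale_with_unit: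
  "unital_quantale mult e \<Longrightarrow> quantale_with_unit mult e"
  unfolding unital_quantale_def by unfold_locales blast+

theorem lemma2p1:
  fixes mult :: "'a::complete_lattice \<Rightarrow> 'a \<Rightarrow> 'a" and e p q :: 'a
  assumes "unital_quantale mult e"
  shows "(DQ mult bot q = {bot} \<and> DQ mult q bot = {bot})
     \<and> DQ mult e e = UNIV
     \<and> q \<in> DQ mult q q
     \<and> bot \<in> DQ mult p q
     \<and> (e \<in> DQ mult top top \<longleftrightarrow> integral mult e)
     \<and> (integral mult e \<longleftrightarrow> (\<forall>p q. DQ mult p q \<subseteq> {u. u \<le> inf p q}))
     \<and> (divisible mult \<longleftrightarrow> (\<forall>p q. DQ mult p q = {u. u \<le> inf p q}))"
proof -
  interpret quantale_with_unit mult e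
    using assms by (rule unital_quantale_imp_quantale_with_unit)
  show ?thesis
    unfolding integral_def
    using DQ_bot_left DQ_bot_right DQ_unit_unit self_in_DQ bot_in_DQ unit_in_DQ_top_iff
      integral_iff_DQ_le_inf divisible_iff_DQ_eq_inf
    by blast
qed

end
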